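(* Let $K$ be a field, $Q$ the bipartite type $A$ quiver with vertices $y_0,x_1,\dots,x_n,y_n$ and arrows $\alpha_i\colon x_i\to y_{i-1}$, $\beta_i\colon x_i\to y_i$, and $\mathbf{d}$ a dimension vector. For every $V\in\mathrm{rep}_Q(\mathbf{d})$ and all $1\le i,j\le 2n+1$, the rank of $\zeta(V)_{i\times j}$ depends only on the $\mathbf{GL}(\mathbf{d})$-orbit of $V$.
   Context: $\mathrm{rep}_Q(\mathbf{d})$ is the space of tuples $V=(V_a)$ with $V_a\in\mathrm{Mat}_{\mathbf{d}(ha)\times\mathbf{d}(ta)}(K)$, with $\mathbf{GL}(\mathbf{d})=\prod_v\mathbf{GL}_{\mathbf{d}(v)}(K)$ acting by $g\cdot V=(g_{ha}V_ag_{ta}^{-1})$. $M_Q(V)$ is the block matrix with block rows $y_0,\dots,y_n$ (top to bottom) and block columns $x_n,\dots,x_1$ (left to right), with $V_{\alpha_i}$ in block $(y_{i-1},x_i)$, $V_{\beta_i}$ in block $(y_i,x_i)$, zero elsewhere. With $d_x=\sum\mathbf{d}(x_i)$, $d_y=\sum\mathbf{d}(y_i)$, $\zeta(V)=\begin{pmatrix}M_Q(V)&\mathbf{1}_{d_y}\\ \mathbf{1}_{d_x}&0\end{pmatrix}$. Rows of $\zeta(V)$ are split into $2n+1$ blocks of sizes $\mathbf{d}(y_0),\dots,\mathbf{d}(y_n),\mathbf{d}(x_n),\dots,\mathbf{d}(x_1)$, columns into $2n+1$ blocks of sizes $\mathbf{d}(x_n),\dots,\mathbf{d}(x_1),\mathbf{d}(y_0),\dots,\mathbf{d}(y_n)$,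 numbered $1,\dots,2n+1$; $Z_{i\times j}$ is the submatrix of block rows $1,\dots,i$ and block columns $1,\dots,j$. *)

theory Defs
  imports "Jordan_Normal_Form.DL_Rank"
begin

text \<open>A dimension vector is given by dy (values at y_0..y_n) and dx (values at x_1..x_n).
 A representation is given by Va i (= V_{alpha_i}) and Vb i (= V_{beta_i}), i = 1..n.\<close>

definition rep_Q :: "nat \<Rightarrow> (nat \<Rightarrow> nat) \<Rightarrow> (nat \<Rightarrow> nat)
    \<Rightarrow> (nat \<Rightarrow> 'a::field mat) \<Rightarrow> (nat \<Rightarrow> 'a mat) \<Rightarrow> bool" where
  "rep_Q n dy dx Va Vb \<longleftrightarrow>
     (\<forall>i\<in>{1..n}. Va i \<in> carrier_mat (dy (i - 1)) (dx i) \<and> Vb i \<in> carrier_mat (dy i) (dx i))"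

text \<open>An element g of GL(d): invertible matrices gy k (k = 0..n) and gx k (k = 1..n);
 we carry their inverses hy, hx explicitly.\<close>

definition GL_elem :: "nat \<Rightarrow> (nat \<Rightarrow> nat) \<Rightarrow> (nat \<Rightarrow> nat)
    \<Rightarrow> (nat \<Rightarrow> 'a::field mat) \<Rightarrow> (nat \<Rightarrow> 'a mat) \<Rightarrow> (nat \<Rightarrow> 'a mat) \<Rightarrow> (nat \<Rightarrow> 'a mat) \<Rightarrow> bool" where
  "GL_elem n dy dx gy hy gx hx \<longleftrightarrow>
     (\<forall>k\<in>{0..n}. gy k \<in> carrier_mat (dy k) (dy k) \<and> hy k \<in> carrier_mat (dy k) (dy k)
        \<and> gy k * hy k = 1\<^sub>m (dy k) \<and> hy k * gy k = 1\<^sub>m (dy k)) \<and>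
     (\<forall>k\<in>{1..n}. gx k \<in> carrier_mat (dx k) (dx k) \<and> hx k \<in> carrier_mat (dx k) (dx k)
        \<and> gx k * hx k = 1\<^sub>m (dx k) \<and> hx k * gx k = 1\<^sub>m (dx k))"

text \<open>The action (g.V)_a = g_{ha} V_a g_{ta}^{-1}.\<close>
definition act_alpha :: "(nat \<Rightarrow> 'a::field mat) \<Rightarrow> (nat \<Rightarrow> 'a mat) \<Rightarrow> (nat \<Rightarrow> 'a mat) \<Rightarrow> nat \<Rightarrow> 'a mat" where
  "act_alpha gy hx Va i = gy (i - 1) * Va i * hx i"

definition act_beta :: "(nat \<Rightarrow> 'a::field mat) \<Rightarrow> (nat \<Rightarrow> 'a mat) \<Rightarrow> (nat \<Rightarrow> 'a mat) \<Rightarrow> nat \<Rightarrow> 'a mat" where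
  "act_beta gy hx Vb i = gy i * Vb i * hx i"

text \<open>Block sizes: rows y_0,...,y_n,x_n,...,x_1; columns x_n,...,x_1,y_0,...,y_n.
 Blocks are numbered 0..2n here (1..2n+1 in the paper).\<close>
definition row_sizes :: "nat \<Rightarrow> (nat \<Rightarrow> nat) \<Rightarrow> (nat \<Rightarrow> nat) \<Rightarrow> nat list" where
  "row_sizes n dy dx = map dy [0..<Suc n] @ map (\<lambda>k. dx (n - k)) [0..<n]"

definition col_sizes :: "nat \<Rightarrow> (nat \<Rightarrow> nat) \<Rightarrow> (nat \<Rightarrow> nat) \<Rightarrow> nat list" where
  "col_sizes n dy dx = map (\<lambda>k. dx (n - k)) [0..<n] @ map dy [0..<Suc n]"

definition blk_off :: "nat list \<Rightarrow> nat \<Rightarrow> nat" where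
  "blk_off l p = sum_list (take p l)"

definition blk_idx :: "nat list \<Rightarrow> nat \<Rightarrow> nat" where
  "blk_idx l r = (LEAST p. r < sum_list (take (Suc p) l))"

definition block_mat :: "nat list \<Rightarrow> nat list \<Rightarrow> (nat \<Rightarrow> nat \<Rightarrow> 'a::zero mat) \<Rightarrow> 'a mat" where
  "block_mat rs cs B = mat (sum_list rs) (sum_list cs)
     (\<lambda>(r, c). let p = blk_idx rs r; q = blk_idx cs c
              in B p q $$ (r - blk_off rs p, c - blk_off cs q))"

text \<open>Blocks of zeta(V): row block p, column block q (0-based).
 Row block p \<le> n is y_p; row block p > n is x_(2n+1-p).
 Column block q < n is x_(n-q); column block q \<ge> n is y_(q-n).\<close>
definition zeta_block :: "nat \<Rightarrow> (nat \<Rightarrow> nat) \<Rightarrow> (nat \<Rightarrow> nat)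
    \<Rightarrow> (nat \<Rightarrow> 'a::field mat) \<Rightarrow> (nat \<Rightarrow> 'a mat) \<Rightarrow> nat \<Rightarrow> nat \<Rightarrow> 'a mat" where
  "zeta_block n dy dx Va Vb p q =
     (if p \<le> n then
        (if q < n then
           (let k = n - q in
              if p + 1 = k then Va k else if p = k then Vb k else 0\<^sub>m (dy p) (dx k))
         else (if q - n = p then 1\<^sub>m (dy p) else 0\<^sub>m (dy p) (dy (q - n))))
      else
        (if q < n then
           (if 2 * n + 1 - p = n - q then 1\<^sub>m (dx (n - q)) else 0\<^sub>m (dx (2 * n + 1 - p)) (dx (n - q)))
         else 0\<^sub>m (dx (2 * n + 1 - p)) (dy (q - n))))"

definition zeta :: "nat \<Rightarrow> (nat \<Rightarrow> nat) \<Rightarrow> (nat \<Rightarrow> nat)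
    \<Rightarrow> (nat \<Rightarrow> 'a::field mat) \<Rightarrow> (nat \<Rightarrow> 'a mat) \<Rightarrow> 'a mat" where
  "zeta n dy dx Va Vb = block_mat (row_sizes n dy dx) (col_sizes n dy dx) (zeta_block n dy dx Va Vb)"

definition Zsub :: "nat \<Rightarrow> (nat \<Rightarrow> nat) \<Rightarrow> (nat \<Rightarrow> nat)
    \<Rightarrow> (nat \<Rightarrow> 'a::field mat) \<Rightarrow> (nat \<Rightarrow> 'a mat) \<Rightarrow> nat \<Rightarrow> nat \<Rightarrow> 'a mat" where
  "Zsub n dy dx Va Vb i j =
     mat (sum_list (take i (row_sizes n dy dx))) (sum_list (take j (col_sizes n dy dx)))
         (\<lambda>(r, c). zeta n dy dx Va Vb $$ (r, c))"

definition mat_rank :: "'a::field mat \<Rightarrow> nat" where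
  "mat_rank A = vec_space.rank (dim_row A) A"

end

theory Submission
  imports Defs
begin

text \<open>Acting by g on V multiplies every block of \<open>\<zeta>(V)\<close> on the left by the component of g at
  the vertex labelling its block row and on the right by the inverse of the component at the
  vertex labelling its block column: for the blocks \<open>V\<^sub>\<alpha>\<^sub>i\<close>, \<open>V\<^sub>\<beta>\<^sub>i\<close> this is the action
  itself, and the identity blocks survive because they sit exactly where block row and block
  column carry the same vertex. Hence \<open>\<zeta>(g\<cdot>V)\<^sub>i\<^sub>\<times>\<^sub>j = D \<zeta>(V)\<^sub>i\<^sub>\<times>\<^sub>j E\<close> with
  invertible block-diagonal D and E, and multiplying by invertible matrices does not change
  the rank.\<close>

section \<open>Rank under invertible factors\<close>

context vec_space
begin

lemma col_space_mult_invertible_right: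
  assumes A: "A \<in> carrier_mat n m" and E: "E \<in> carrier_mat m m" and E': "E' \<in> carrier_mat m m"
    and EE': "E * E' = 1\<^sub>m m"
  shows "col_space (A * E) = col_space A"
proof -
  have AE: "A * E \<in> carrier_mat n m" using A E by auto
  show ?thesis
  proof (intro equalityI subsetI)
    fix y assume "y \<in> col_space (A * E)"
    then obtain x where x: "x \<in> carrier_vec m" "y = (A * E) *\<^sub>v x"
      unfolding col_space_eq[OF AE] using AE by auto
    then have "y = A *\<^sub>v (E *\<^sub>v x)" using A E by (metis assoc_mult_mat_vec)
    then show "y \<in> col_space A" unfolding col_space_eq[OF A] using x A E by auto
  next
    fix y assume "y \<in> col_space A"
    then obtain x where x: "x \<in> carrier_vec m" "y = A *\<^sub>v x"
      unfolding col_space_eq[OF A] using A by auto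
    have "A *\<^sub>v x = A *\<^sub>v ((E * E') *\<^sub>v x)" using EE' x by simp
    also have "\<dots> = (A * E) *\<^sub>v (E' *\<^sub>v x)" using A E E' x
      by (metis assoc_mult_mat_vec mult_mat_vec_carrier)
    finally show "y \<in> col_space (A * E)" unfolding col_space_eq[OF AE] using x A E E' by auto
  qed
qed

lemma rank_mult_invertible_right:
  assumes "A \<in> carrier_mat n m" "E \<in> carrier_mat m m" "E' \<in> carrier_mat m m" "E * E' = 1\<^sub>m m"
  shows "rank (A * E) = rank A"
  using col_space_mult_invertible_right[OF assms] unfolding rank_def col_space_def by simp

text \<open>Left multiplication by D is a linear bijection from the column space of A onto that of
  \<open>D * A\<close>; a left inverse of D is all that injectivity needs.\<close>

lemma rank_mult_invertible_left:
  assumes A: "A \<in> carrier_mat n m" and D: "D \<in> carrier_mat n n" and D': "D' \<in> carrier_mat n n"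
    and D'D: "D' * D = 1\<^sub>m n"
  shows "rank (D * A) = rank A"
proof -
  have DA: "D * A \<in> carrier_mat n m" using A D by auto
  let ?S = "set (cols A)" and ?S' = "set (cols (D * A))"
  have spA: "span ?S = {y \<in> carrier_vec n. \<exists>x\<in>carrier_vec m. A *\<^sub>v x = y}"
    using col_space_eq[OF A] unfolding col_space_def by (simp add: carrier_matD[OF A])
  have spDA: "span ?S' = {y \<in> carrier_vec n. \<exists>x\<in>carrier_vec m. (D * A) *\<^sub>v x = y}"
    using col_space_eq[OF DA] unfolding col_space_def by (simp add: carrier_matD[OF D] carrier_matD[OF A])
  have img: "(\<lambda>v. D *\<^sub>v v) ` span ?S = span ?S'"
  proof
    show "(\<lambda>v. D *\<^sub>v v) ` span ?S \<subseteq> span ?S'"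
    proof
      fix y assume "y \<in> (\<lambda>v. D *\<^sub>v v) ` span ?S"
      then obtain x where "x \<in> carrier_vec m" "y = D *\<^sub>v (A *\<^sub>v x)" unfolding spA by auto
      then show "y \<in> span ?S'" unfolding spDA using A D by (auto simp: assoc_mult_mat_vec[OF D A])
    qed
  next
    show "span ?S' \<subseteq> (\<lambda>v. D *\<^sub>v v) ` span ?S"
    proof
      fix y assume "y \<in> span ?S'"
      then obtain x where x: "x \<in> carrier_vec m" "y = (D * A) *\<^sub>v x" unfolding spDA by auto
      then have "y = D *\<^sub>v (A *\<^sub>v x)" using A D by (simp add: assoc_mult_mat_vec)
      moreover have "A *\<^sub>v x \<in> span ?S" unfolding spA using x A by auto
      ultimately show "y \<in> (\<lambda>v. D *\<^sub>v v) ` span ?S" by blast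
    qed
  qed
  have inj: "inj_on (\<lambda>v. D *\<^sub>v v) (span ?S)"
  proof
    fix x y assume "x \<in> span ?S" "y \<in> span ?S" and e: "D *\<^sub>v x = D *\<^sub>v y"
    then have x: "x \<in> carrier_vec n" and y: "y \<in> carrier_vec n" unfolding spA by auto
    have "x = D' *\<^sub>v (D *\<^sub>v x)" using D D' D'D x by (simp flip: assoc_mult_mat_vec)
    also have "\<dots> = y" using D D' D'D y e by (simp flip: assoc_mult_mat_vec)
    finally show "x = y" .
  qed
  have vs: "vectorspace class_ring (span_vs ?S)" "vectorspace class_ring (span_vs ?S')"
    using A DA cols_dim span_is_subspace subspace_is_vs by blast+
  have "(\<lambda>v. D *\<^sub>v v) \<in> LinearCombinations.module_hom class_ring (span_vs ?S) (span_vs ?S')"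
    unfolding LinearCombinations.module_hom_def using img
    by (auto simp: spA intro!: mult_add_distrib_mat_vec[OF D] mult_mat_vec[OF D])
  then interpret L: linear_map class_ring "span_vs ?S" "span_vs ?S'" "\<lambda>v. D *\<^sub>v v"
    unfolding linear_map_def mod_hom_def mod_hom_axioms_def using vs by (simp add: vectorspace_def)
  have "L.V.fin_dim" using fin_dim_span_cols[OF A] by simp
  then have "L.V.dim = L.W.dim" using L.dim_eq inj img by simp
  then show ?thesis unfolding rank_def by simp
qed

end

lemma mat_rank_mult_invertible:
  assumes A: "A \<in> carrier_mat n m"
    and D: "D \<in> carrier_mat n n" "D' \<in> carrier_mat n n" "D' * D = 1\<^sub>m n"
    and E: "E \<in> carrier_mat m m" "E' \<in> carrier_mat m m" "E * E' = 1\<^sub>m m"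
  shows "mat_rank (D * A * E) = mat_rank A"
proof -
  have "D * A \<in> carrier_mat n m" using A D by auto
  then show ?thesis
    using A D(1) unfolding mat_rank_def
    by (simp add: vec_space.rank_mult_invertible_right[OF _ E]
        vec_space.rank_mult_invertible_left[OF A D])
qed

section \<open>Block matrices\<close>

lemma sum_list_take_mono: "a \<le> b \<Longrightarrow> sum_list (take a (l :: nat list)) \<le> sum_list (take b l)"
  by (metis le_add_diff_inverse le_add1 sum_list_append take_add)

lemma sum_list_take_le: "sum_list (take i (l :: nat list)) \<le> sum_list l"
  using sum_list_take_mono[of i "length l" l] by (cases "i \<le> length l") auto

lemma sum_list_take_Suc_blk_off:
  "p < length l \<Longrightarrow> sum_list (take (Suc p) l) = blk_off l p + (l ! p :: nat)"
  unfolding blk_off_def by (simp add: take_Suc_conv_app_nth)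

lemma blk_off_add_nth_le: "p < length l \<Longrightarrow> blk_off l p + (l ! p :: nat) \<le> sum_list l"
  using sum_list_take_Suc_blk_off[of p l] sum_list_take_mono[of "Suc p" "length l" l] by simp

lemma blk_idx_blk_off_add:
  assumes p: "p < length l" and t: "t < (l ! p :: nat)"
  shows "blk_idx l (blk_off l p + t) = p"
  unfolding blk_idx_def
proof (rule Least_equality)
  show "blk_off l p + t < sum_list (take (Suc p) l)" using sum_list_take_Suc_blk_off[OF p] t by simp
  fix y assume y: "blk_off l p + t < sum_list (take (Suc y) l)"
  show "p \<le> y"
  proof (rule ccontr)
    assume "\<not> p \<le> y"
    then have "sum_list (take (Suc y) l) \<le> blk_off l p"
      unfolding blk_off_def by (intro sum_list_take_mono) simp
    then show False using y by simp
  qed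
qed

lemma blk_idx_bounds:
  assumes r: "r < sum_list (l :: nat list)"
  shows "blk_idx l r < length l" "blk_off l (blk_idx l r) \<le> r"
    "r < blk_off l (blk_idx l r) + l ! blk_idx l r"
proof -
  let ?P = "\<lambda>p. r < sum_list (take (Suc p) l)" and ?p = "blk_idx l r"
  have ne: "l \<noteq> []" using r by auto
  have ex: "?P (length l - 1)" using ne r by simp
  have lt: "?P ?p" unfolding blk_idx_def by (rule LeastI[of ?P, OF ex])
  have "?p \<le> length l - 1" unfolding blk_idx_def by (rule Least_le[of ?P, OF ex])
  then show p: "?p < length l" using ne by (cases l) auto
  show "r < blk_off l ?p + l ! ?p" using lt sum_list_take_Suc_blk_off[OF p] by simp
  show "blk_off l ?p \<le> r"
  proof (cases ?p)
    case (Suc p')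
    have "\<not> ?P p'" unfolding blk_idx_def by (rule not_less_Least) (use Suc in \<open>simp add: blk_idx_def\<close>)
    then show ?thesis using Suc by (simp add: blk_off_def)
  qed (simp add: blk_off_def)
qed

lemma blk_idx_take:
  assumes r: "r < sum_list (take i (l :: nat list))"
  shows "blk_idx (take i l) r = blk_idx l r"
    and "blk_off (take i l) (blk_idx l r) = blk_off l (blk_idx l r)"
proof -
  let ?p = "blk_idx (take i l) r"
  note b = blk_idx_bounds[OF r]
  have p: "?p < i" "?p < length l" using b(1) by auto
  have off: "blk_off (take i l) ?p = blk_off l ?p" unfolding blk_off_def using p by (simp add: min_def)
  have "blk_idx l (blk_off l ?p + (r - blk_off l ?p)) = ?p"
    by (rule blk_idx_blk_off_add) (use p b off in auto)
  then have e: "blk_idx l r = ?p" using b off by simp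
  then show "blk_idx (take i l) r = blk_idx l r" by simp
  show "blk_off (take i l) (blk_idx l r) = blk_off l (blk_idx l r)" using e off by simp
qed

lemma block_mat_carrier [simp]:
  "dim_row (block_mat rs cs B) = sum_list rs" "dim_col (block_mat rs cs B) = sum_list cs"
  "block_mat rs cs B \<in> carrier_mat (sum_list rs) (sum_list cs)"
  by (auto simp: block_mat_def)

lemma index_block_mat:
  "r < sum_list rs \<Longrightarrow> c < sum_list cs \<Longrightarrow> block_mat rs cs B $$ (r, c) =
     B (blk_idx rs r) (blk_idx cs c) $$ (r - blk_off rs (blk_idx rs r), c - blk_off cs (blk_idx cs c))"
  by (simp add: block_mat_def Let_def)

lemma block_mat_cong:
  assumes "\<And>p q. p < length rs \<Longrightarrow> q < length cs \<Longrightarrow> B p q = B' p q"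
  shows "block_mat rs cs B = block_mat rs cs B'"
  by (rule eq_matI) (auto simp: index_block_mat assms blk_idx_bounds)

lemma transpose_block_mat:
  assumes "\<And>p q. p < length rs \<Longrightarrow> q < length cs \<Longrightarrow> B p q \<in> carrier_mat (rs ! p) (cs ! q)"
  shows "transpose_mat (block_mat rs cs B) = block_mat cs rs (\<lambda>q p. transpose_mat (B p q))"
proof (rule eq_matI)
  fix c r assume "c < dim_row (block_mat cs rs (\<lambda>q p. transpose_mat (B p q)))"
    "r < dim_col (block_mat cs rs (\<lambda>q p. transpose_mat (B p q)))"
  then have c: "c < sum_list cs" and r: "r < sum_list rs" by auto
  show "transpose_mat (block_mat rs cs B) $$ (c, r) = block_mat cs rs (\<lambda>q p. transpose_mat (B p q)) $$ (c, r)"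
    using c r blk_idx_bounds[OF c] blk_idx_bounds[OF r] assms[of "blk_idx rs r" "blk_idx cs c"]
    by (auto simp: index_block_mat)
qed auto

definition bdiag :: "nat list \<Rightarrow> (nat \<Rightarrow> 'a::zero mat) \<Rightarrow> 'a mat" where
  "bdiag l P = block_mat l l (\<lambda>p q. if p = q then P p else 0\<^sub>m (l ! p) (l ! q))"

lemma bdiag_carrier [simp]:
  "dim_row (bdiag l P) = sum_list l" "dim_col (bdiag l P) = sum_list l"
  "bdiag l P \<in> carrier_mat (sum_list l) (sum_list l)"
  by (simp_all add: bdiag_def)

lemma index_bdiag:
  assumes r: "r < sum_list l" and k: "k < sum_list l"
  shows "bdiag l P $$ (r, k) = (if blk_idx l k = blk_idx l r
      then P (blk_idx l r) $$ (r - blk_off l (blk_idx l r), k - blk_off l (blk_idx l r)) else 0)"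
  using blk_idx_bounds[OF r] blk_idx_bounds[OF k]
  by (auto simp: bdiag_def index_block_mat[OF r k])

lemma transpose_bdiag:
  assumes "\<And>p. p < length l \<Longrightarrow> P p \<in> carrier_mat (l ! p) (l ! p)"
  shows "transpose_mat (bdiag l P) = bdiag l (\<lambda>p. transpose_mat (P p))"
  unfolding bdiag_def using assms
  by (subst transpose_block_mat) (auto intro: block_mat_cong)

lemma index_mult_mat_sum:
  "i < dim_row A \<Longrightarrow> j < dim_col B \<Longrightarrow> dim_col A = dim_row B \<Longrightarrow>
    (A * B) $$ (i, j) = (\<Sum>k<dim_row B. A $$ (i, k) * B $$ (k, j))"
  by (auto simp: scalar_prod_def atLeast0LessThan intro!: sum.cong)

lemma sum_lessThan_restrict:
  fixes f :: "nat \<Rightarrow> 'a::comm_monoid_add"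
  assumes "ofs + s \<le> N" "\<And>k. k < N \<Longrightarrow> k < ofs \<or> ofs + s \<le> k \<Longrightarrow> f k = 0"
  shows "sum f {..<N} = (\<Sum>t<s. f (ofs + t))"
proof -
  have "sum f {..<N} = sum f {ofs..<ofs + s}"
    by (rule sum.mono_neutral_right) (use assms in auto)
  also have "\<dots> = (\<Sum>t<s. f (ofs + t))"
    using sum.shift_bounds_nat_ivl[of f 0 ofs s] by (simp add: add.commute atLeast0LessThan)
  finally show ?thesis .
qed

lemma bdiag_mult_block_mat:
  assumes P: "\<And>p. p < length rs \<Longrightarrow> P p \<in> carrier_mat (rs ! p) (rs ! p)"
    and B: "\<And>p q. p < length rs \<Longrightarrow> q < length cs \<Longrightarrow> B p q \<in> carrier_mat (rs ! p) (cs ! q)"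
  shows "bdiag rs P * block_mat rs cs B = block_mat rs cs (\<lambda>p q. P p * B p q)"
proof (rule eq_matI)
  fix r c assume "r < dim_row (block_mat rs cs (\<lambda>p q. P p * B p q))"
    "c < dim_col (block_mat rs cs (\<lambda>p q. P p * B p q))"
  then have r: "r < sum_list rs" and c: "c < sum_list cs" by auto
  define p where "p = blk_idx rs r"
  define ofs where "ofs = blk_off rs p"
  define q where "q = blk_idx cs c"
  note br = blk_idx_bounds[OF r, folded p_def, folded ofs_def]
  note bc = blk_idx_bounds[OF c, folded q_def]
  have Pp: "P p \<in> carrier_mat (rs ! p) (rs ! p)" and Bpq: "B p q \<in> carrier_mat (rs ! p) (cs ! q)"
    using P B br bc by auto
  have "(bdiag rs P * block_mat rs cs B) $$ (r, c) =
      (\<Sum>k<sum_list rs. bdiag rs P $$ (r, k) * block_mat rs cs B $$ (k, c))"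
    using r c index_mult_mat_sum[of r "bdiag rs P" c "block_mat rs cs B"] by simp
  also have "\<dots> = (\<Sum>t<rs ! p. bdiag rs P $$ (r, ofs + t) * block_mat rs cs B $$ (ofs + t, c))"
  proof (rule sum_lessThan_restrict)
    show "ofs + rs ! p \<le> sum_list rs" unfolding ofs_def using blk_off_add_nth_le br(1) by blast
    fix k assume k: "k < sum_list rs" "k < ofs \<or> ofs + rs ! p \<le> k"
    then have "blk_idx rs k \<noteq> p" using blk_idx_bounds[OF k(1)] unfolding ofs_def by auto
    then show "bdiag rs P $$ (r, k) * block_mat rs cs B $$ (k, c) = 0"
      using index_bdiag[OF r k(1), of P] p_def by simp
  qed
  also have "\<dots> = (\<Sum>t<rs ! p. P p $$ (r - ofs, t) * B p q $$ (t, c - blk_off cs q))"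
  proof (rule sum.cong)
    fix t assume "t \<in> {..<rs ! p}"
    then have t: "ofs + t < sum_list rs" "blk_idx rs (ofs + t) = p"
      using blk_off_add_nth_le[OF br(1)] blk_idx_blk_off_add[OF br(1)] unfolding ofs_def by auto
    then show "bdiag rs P $$ (r, ofs + t) * block_mat rs cs B $$ (ofs + t, c) =
        P p $$ (r - ofs, t) * B p q $$ (t, c - blk_off cs q)"
      using index_bdiag[OF r t(1), of P] index_block_mat[OF t(1) c, of B] p_def ofs_def q_def by simp
  qed simp
  also have "\<dots> = (P p * B p q) $$ (r - ofs, c - blk_off cs q)"
    using Pp Bpq br bc by (subst index_mult_mat_sum) auto
  also have "\<dots> = block_mat rs cs (\<lambda>p q. P p * B p q) $$ (r, c)"
    using index_block_mat[OF r c, of "\<lambda>p q. P p * B p q"] p_def ofs_def q_def by simp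
  finally show "(bdiag rs P * block_mat rs cs B) $$ (r, c) = block_mat rs cs (\<lambda>p q. P p * B p q) $$ (r, c)" .
qed (auto simp: bdiag_def)

lemma block_mat_mult_bdiag:
  fixes Q :: "nat \<Rightarrow> 'a::comm_ring_1 mat"
  assumes Q: "\<And>q. q < length cs \<Longrightarrow> Q q \<in> carrier_mat (cs ! q) (cs ! q)"
    and B: "\<And>p q. p < length rs \<Longrightarrow> q < length cs \<Longrightarrow> B p q \<in> carrier_mat (rs ! p) (cs ! q)"
  shows "block_mat rs cs B * bdiag cs Q = block_mat rs cs (\<lambda>p q. B p q * Q q)"
proof -
  have BQ: "\<And>p q. p < length rs \<Longrightarrow> q < length cs \<Longrightarrow> B p q * Q q \<in> carrier_mat (rs ! p) (cs ! q)"
    using B Q by (meson mult_carrier_mat)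
  have "transpose_mat (block_mat rs cs B * bdiag cs Q)
      = bdiag cs (\<lambda>q. transpose_mat (Q q)) * block_mat cs rs (\<lambda>q p. transpose_mat (B p q))"
    by (simp add: transpose_mult[OF block_mat_carrier(3) bdiag_carrier(3)] transpose_bdiag Q
        transpose_block_mat B)
  also have "\<dots> = block_mat cs rs (\<lambda>q p. transpose_mat (Q q) * transpose_mat (B p q))"
    by (rule bdiag_mult_block_mat) (use B Q in auto)
  also have "\<dots> = transpose_mat (block_mat rs cs (\<lambda>p q. B p q * Q q))"
    by (subst transpose_block_mat[OF BQ]) (auto intro!: block_mat_cong transpose_mult[symmetric] B Q)
  finally show ?thesis by simp
qed

lemma bdiag_mult_bdiag_one:
  assumes "\<And>p. p < length l \<Longrightarrow> P p \<in> carrier_mat (l ! p) (l ! p) \<and> Q p \<in> carrier_mat (l ! p) (l ! p)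
     \<and> P p * Q p = 1\<^sub>m (l ! p)"
  shows "bdiag l P * bdiag l Q = 1\<^sub>m (sum_list l)"
proof -
  have "bdiag l P * bdiag l Q = block_mat l l (\<lambda>p q. P p * (if p = q then Q p else 0\<^sub>m (l ! p) (l ! q)))"
    unfolding bdiag_def[of l Q] by (rule bdiag_mult_block_mat) (use assms in auto)
  also have "\<dots> = bdiag l (\<lambda>p. 1\<^sub>m (l ! p))"
    unfolding bdiag_def by (rule block_mat_cong) (use assms in \<open>auto intro: right_mult_zero_mat\<close>)
  also have "\<dots> = 1\<^sub>m (sum_list l)"
  proof (rule eq_matI)
    fix r k assume "r < dim_row (1\<^sub>m (sum_list l))" "k < dim_col (1\<^sub>m (sum_list l) :: 'a mat)"
    then have r: "r < sum_list l" and k: "k < sum_list l" by auto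
    show "bdiag l (\<lambda>p. 1\<^sub>m (l ! p)) $$ (r, k) = 1\<^sub>m (sum_list l) $$ (r, k)"
      using r k blk_idx_bounds[OF r] blk_idx_bounds[OF k] by (auto simp: index_bdiag[OF r k])
  qed auto
  finally show ?thesis .
qed

section \<open>The matrix \<open>\<zeta>(V)\<close>\<close>

lemma length_row_sizes [simp]: "length (row_sizes n dy dx) = 2 * n + 1"
  by (simp add: row_sizes_def)

lemma length_col_sizes [simp]: "length (col_sizes n dy dx) = 2 * n + 1"
  by (simp add: col_sizes_def)

lemma nth_row_sizes:
  "p < 2 * n + 1 \<Longrightarrow> row_sizes n dy dx ! p = (if p \<le> n then dy p else dx (2 * n + 1 - p))"
  unfolding row_sizes_def by (auto simp: nth_append Suc_diff_le mult_2)

lemma nth_col_sizes: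
  "q < 2 * n + 1 \<Longrightarrow> col_sizes n dy dx ! q = (if q < n then dx (n - q) else dy (q - n))"
  unfolding col_sizes_def by (auto simp: nth_append intro!: arg_cong[where f=dy])

lemma Zsub_eq_block_mat:
  "Zsub n dy dx Va Vb i j =
     block_mat (take i (row_sizes n dy dx)) (take j (col_sizes n dy dx)) (zeta_block n dy dx Va Vb)"
proof (rule eq_matI)
  let ?rs = "row_sizes n dy dx" and ?cs = "col_sizes n dy dx"
  fix r c assume "r < dim_row (block_mat (take i ?rs) (take j ?cs) (zeta_block n dy dx Va Vb))"
    "c < dim_col (block_mat (take i ?rs) (take j ?cs) (zeta_block n dy dx Va Vb))"
  then have "r < sum_list (take i ?rs)" "c < sum_list (take j ?cs)" by auto
  moreover have "r < sum_list ?rs" "c < sum_list ?cs"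
    using calculation sum_list_take_le[of i ?rs] sum_list_take_le[of j ?cs] by linarith+
  ultimately show "Zsub n dy dx Va Vb i j $$ (r, c) =
      block_mat (take i ?rs) (take j ?cs) (zeta_block n dy dx Va Vb) $$ (r, c)"
    unfolding Zsub_def zeta_def by (simp add: index_block_mat blk_idx_take)
qed (auto simp: Zsub_def)

lemma zeta_block_carrier:
  assumes rep: "rep_Q n dy dx Va Vb" and p: "p < 2 * n + 1" and q: "q < 2 * n + 1"
  shows "zeta_block n dy dx Va Vb p q \<in> carrier_mat (row_sizes n dy dx ! p) (col_sizes n dy dx ! q)"
proof (cases "p \<le> n \<and> q < n")
  case True
  then have "n - q \<in> {1..n}" by auto
  then have "Va (n - q) \<in> carrier_mat (dy (n - q - 1)) (dx (n - q))"
    "Vb (n - q) \<in> carrier_mat (dy (n - q)) (dx (n - q))"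
    using rep unfolding rep_Q_def by blast+
  moreover have "Suc p = n - q \<Longrightarrow> n - q - 1 = p" by arith
  ultimately show ?thesis
    using True p q by (auto simp: zeta_block_def nth_row_sizes nth_col_sizes Let_def)
qed (use p q in \<open>auto simp: zeta_block_def nth_row_sizes nth_col_sizes\<close>)

lemma GL_elemD:
  assumes "GL_elem n dy dx gy hy gx hx"
  shows "k \<le> n \<Longrightarrow> gy k \<in> carrier_mat (dy k) (dy k) \<and> hy k \<in> carrier_mat (dy k) (dy k)
      \<and> gy k * hy k = 1\<^sub>m (dy k) \<and> hy k * gy k = 1\<^sub>m (dy k)"
    and "1 \<le> k \<Longrightarrow> k \<le> n \<Longrightarrow> gx k \<in> carrier_mat (dx k) (dx k) \<and> hx k \<in> carrier_mat (dx k) (dx k)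
      \<and> gx k * hx k = 1\<^sub>m (dx k) \<and> hx k * gx k = 1\<^sub>m (dx k)"
  using assms unfolding GL_elem_def by auto

definition row_block_comp :: "nat \<Rightarrow> (nat \<Rightarrow> 'a mat) \<Rightarrow> (nat \<Rightarrow> 'a mat) \<Rightarrow> nat \<Rightarrow> 'a mat" where
  "row_block_comp n gy gx p = (if p \<le> n then gy p else gx (2 * n + 1 - p))"

definition col_block_comp :: "nat \<Rightarrow> (nat \<Rightarrow> 'a mat) \<Rightarrow> (nat \<Rightarrow> 'a mat) \<Rightarrow> nat \<Rightarrow> 'a mat" where
  "col_block_comp n gy gx q = (if q < n then gx (n - q) else gy (q - n))"

lemma row_block_comp_inverse:
  assumes gl: "GL_elem n dy dx gy hy gx hx" and p: "p < 2 * n + 1"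
  shows "row_block_comp n gy gx p \<in> carrier_mat (row_sizes n dy dx ! p) (row_sizes n dy dx ! p)
    \<and> row_block_comp n hy hx p \<in> carrier_mat (row_sizes n dy dx ! p) (row_sizes n dy dx ! p)
    \<and> row_block_comp n gy gx p * row_block_comp n hy hx p = 1\<^sub>m (row_sizes n dy dx ! p)
    \<and> row_block_comp n hy hx p * row_block_comp n gy gx p = 1\<^sub>m (row_sizes n dy dx ! p)"
proof (cases "p \<le> n")
  case True
  then show ?thesis using GL_elemD(1)[OF gl True] p by (simp add: row_block_comp_def nth_row_sizes)
next
  case False
  then have "1 \<le> 2 * n + 1 - p" "2 * n + 1 - p \<le> n" using p by auto
  then show ?thesis using GL_elemD(2)[OF gl] False p by (simp add: row_block_comp_def nth_row_sizes)
qed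

lemma col_block_comp_inverse:
  assumes gl: "GL_elem n dy dx gy hy gx hx" and q: "q < 2 * n + 1"
  shows "col_block_comp n gy gx q \<in> carrier_mat (col_sizes n dy dx ! q) (col_sizes n dy dx ! q)
    \<and> col_block_comp n hy hx q \<in> carrier_mat (col_sizes n dy dx ! q) (col_sizes n dy dx ! q)
    \<and> col_block_comp n gy gx q * col_block_comp n hy hx q = 1\<^sub>m (col_sizes n dy dx ! q)
    \<and> col_block_comp n hy hx q * col_block_comp n gy gx q = 1\<^sub>m (col_sizes n dy dx ! q)"
proof (cases "q < n")
  case True
  then have "1 \<le> n - q" "n - q \<le> n" by auto
  then show ?thesis using GL_elemD(2)[OF gl] True q by (simp add: col_block_comp_def nth_col_sizes)
next
  case False
  then have "q - n \<le> n" using q by auto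
  then show ?thesis using GL_elemD(1)[OF gl] False q by (simp add: col_block_comp_def nth_col_sizes)
qed

lemma zeta_block_act:
  assumes gl: "GL_elem n dy dx gy hy gx hx" and p: "p < 2 * n + 1" and q: "q < 2 * n + 1"
  shows "zeta_block n dy dx (act_alpha gy hx Va) (act_beta gy hx Vb) p q =
     row_block_comp n gy gx p * zeta_block n dy dx Va Vb p q * col_block_comp n hy hx q"
proof -
  note G = row_block_comp_inverse[OF gl p] col_block_comp_inverse[OF gl q]
  let ?r = "row_sizes n dy dx ! p" and ?c = "col_sizes n dy dx ! q"
  have "row_block_comp n gy gx p * 0\<^sub>m ?r ?c * col_block_comp n hy hx q = 0\<^sub>m ?r ?c"
    using G by (simp add: right_mult_zero_mat[of _ ?r ?r] left_mult_zero_mat[of _ ?c ?c])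
  moreover have "row_block_comp n gy gx p * 1\<^sub>m ?r * col_block_comp n hy hx q = 1\<^sub>m ?r"
    if "row_block_comp n hy hx p = col_block_comp n hy hx q"
    using G that by (simp add: right_mult_one_mat[of _ ?r ?r])
  moreover have "Suc p = n - q \<Longrightarrow> n - Suc q = p" by arith
  ultimately show ?thesis
    using p q by (auto simp: zeta_block_def row_block_comp_def col_block_comp_def Let_def
        act_alpha_def act_beta_def nth_row_sizes nth_col_sizes)
qed

lemma Zsub_act:
  assumes rep: "rep_Q n dy dx Va Vb" and gl: "GL_elem n dy dx gy hy gx hx"
    and i: "i \<le> 2 * n + 1" and j: "j \<le> 2 * n + 1"
  shows "Zsub n dy dx (act_alpha gy hx Va) (act_beta gy hx Vb) i j
    = bdiag (take i (row_sizes n dy dx)) (row_block_comp n gy gx) * Zsub n dy dx Va Vb i j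
      * bdiag (take j (col_sizes n dy dx)) (col_block_comp n hy hx)"
proof -
  let ?rs = "take i (row_sizes n dy dx)" and ?cs = "take j (col_sizes n dy dx)"
  let ?D = "row_block_comp n gy gx" and ?E = "col_block_comp n hy hx" and ?Z = "zeta_block n dy dx Va Vb"
  have D: "p < length ?rs \<Longrightarrow> ?D p \<in> carrier_mat (?rs ! p) (?rs ! p)" for p
    using row_block_comp_inverse[OF gl, of p] i by simp
  have E: "q < length ?cs \<Longrightarrow> ?E q \<in> carrier_mat (?cs ! q) (?cs ! q)" for q
    using col_block_comp_inverse[OF gl, of q] j by simp
  have Z: "p < length ?rs \<Longrightarrow> q < length ?cs \<Longrightarrow> ?Z p q \<in> carrier_mat (?rs ! p) (?cs ! q)" for p q
    using zeta_block_carrier[OF rep, of p q] i j by simp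
  have "Zsub n dy dx (act_alpha gy hx Va) (act_beta gy hx Vb) i j
      = block_mat ?rs ?cs (\<lambda>p q. ?D p * ?Z p q * ?E q)"
    unfolding Zsub_eq_block_mat using i j by (auto intro!: block_mat_cong zeta_block_act[OF gl])
  also have "\<dots> = block_mat ?rs ?cs (\<lambda>p q. ?D p * ?Z p q) * bdiag ?cs ?E"
  proof (rule block_mat_mult_bdiag[symmetric])
    fix p q assume "p < length ?rs" "q < length ?cs"
    then show "?D p * ?Z p q \<in> carrier_mat (?rs ! p) (?cs ! q)" using D Z by (meson mult_carrier_mat)
  qed (rule E)
  also have "block_mat ?rs ?cs (\<lambda>p q. ?D p * ?Z p q) = bdiag ?rs ?D * block_mat ?rs ?cs ?Z"
    by (rule bdiag_mult_block_mat[symmetric]) (use D Z in auto)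
  finally show ?thesis unfolding Zsub_eq_block_mat .
qed

theorem lemma4p2:
  fixes n :: nat and dy dx :: "nat \<Rightarrow> nat"
    and Va Vb gy hy gx hx :: "nat \<Rightarrow> 'a::field mat"
    and i j :: nat
  assumes "rep_Q n dy dx Va Vb"
    and "GL_elem n dy dx gy hy gx hx"
    and "1 \<le> i" "i \<le> 2 * n + 1" "1 \<le> j" "j \<le> 2 * n + 1"
  shows "mat_rank (Zsub n dy dx (act_alpha gy hx Va) (act_beta gy hx Vb) i j)
       = mat_rank (Zsub n dy dx Va Vb i j)"
proof -
  let ?rs = "take i (row_sizes n dy dx)" and ?cs = "take j (col_sizes n dy dx)"
  have "bdiag ?rs (row_block_comp n hy hx) * bdiag ?rs (row_block_comp n gy gx) = 1\<^sub>m (sum_list ?rs)"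
    by (rule bdiag_mult_bdiag_one) (use row_block_comp_inverse[OF assms(2)] assms(4) in auto)
  moreover have "bdiag ?cs (col_block_comp n hy hx) * bdiag ?cs (col_block_comp n gy gx) = 1\<^sub>m (sum_list ?cs)"
    by (rule bdiag_mult_bdiag_one) (use col_block_comp_inverse[OF assms(2)] assms(6) in auto)
  moreover have "Zsub n dy dx Va Vb i j \<in> carrier_mat (sum_list ?rs) (sum_list ?cs)"
    unfolding Zsub_eq_block_mat by simp
  ultimately show ?thesis
    unfolding Zsub_act[OF assms(1,2,4,6)] by (intro mat_rank_mult_invertible) auto
qed

end
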